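(* Let $a\in(0,2)$, $\gamma\in(0,a)$ and $p\in\big(\frac{2}{2-\gamma},\frac{2}{2-a}\big)$. There exists a constant $C_{\gamma,p,a}>0$ such that for every $N\ge2$ and every random vector $(X_1,\dots,X_N)\in(\mathbb R^2)^N$ with law $F^N\in\mathcal P_{\rm sym}(\mathbb R^{2N})$, $$\sup_{1\le i\ne j\le N}\mathbb E\big[|X_i-X_j|^{-\gamma}\big]\le C_{\gamma,p,a}\Big(1+\mathcal I^N_a(F^N)^{1-\frac2a\left(\frac1p-\frac{2-a}{2}\right)}\Big).$$
   Context: $\mathcal P_{\rm sym}(\mathbb R^{2N})$: probability measures on $(\mathbb R^2)^N$ invariant under permutations of the $N$ components. With $\Phi(x,y)=(x-y)(\ln x-\ln y)$ and $X^x_k=(x_1,\dots,x_{k-1},x,x_{k+1},\dots,x_N)$, $\mathcal I^N_a(G)=\frac{1}{2N}\sum_{k=1}^N\int_{\mathbb R^{2(N-1)}}\int_{\mathbb R^2\times\mathbb R^2}\frac{\Phi(G(X_k^x),G(X_k^y))}{|x-y|^{2+a}}dxdy\prod_{j\ne k}dx_j$. *)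

theory Defs
  imports "HOL-Probability.Probability"
begin

text \<open>Points of R^2 are vectors of type real^2; configurations of N points are
  extensional functions on the index set {..<N}.  Lebesgue measure on (R^2)^N
  is the product measure below.\<close>

definition leb_conf :: "nat \<Rightarrow> (nat \<Rightarrow> real^2) measure" where
  "leb_conf N = PiM {..<N} (\<lambda>_. lborel)"

definition sym_prob :: "nat \<Rightarrow> (nat \<Rightarrow> real^2) measure \<Rightarrow> bool" where
  "sym_prob N F \<longleftrightarrow> prob_space F \<and> sets F = sets (leb_conf N) \<and>
     (\<forall>\<sigma>. \<sigma> permutes {..<N} \<longrightarrow> distr F F (\<lambda>x. x \<circ> \<sigma>) = F)"

definition Phi :: "real \<Rightarrow> real \<Rightarrow> ennreal" where
  "Phi x y = (if x = y then 0 else if x \<le> 0 \<or> y \<le> 0 then \<top>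
              else ennreal ((x - y) * (ln x - ln y)))"

definition fisher_a :: "real \<Rightarrow> nat \<Rightarrow> ((nat \<Rightarrow> real^2) \<Rightarrow> real) \<Rightarrow> ennreal" where
  "fisher_a a N G = ennreal (1 / (2 * real N)) *
     (\<Sum>k<N. \<integral>\<^sup>+ z. (\<integral>\<^sup>+ x. \<integral>\<^sup>+ y.
         Phi (G (z(k := x))) (G (z(k := y))) * ennreal (norm (x - y) powr (-(2 + a)))
       \<partial>lborel \<partial>lborel) \<partial>(PiM ({..<N} - {k}) (\<lambda>_. lborel)))"

text \<open>Fractional Fisher information of a measure: the value at (any) density
  w.r.t. Lebesgue measure; +inf if F has no density.\<close>

definition fisher_meas :: "real \<Rightarrow> nat \<Rightarrow> (nat \<Rightarrow> real^2) measure \<Rightarrow> ennreal" where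
  "fisher_meas a N F = (INF G \<in> {G. G \<in> borel_measurable (leb_conf N) \<and> (\<forall>x. 0 \<le> G x) \<and>
        F = density (leb_conf N) (\<lambda>x. ennreal (G x))}. fisher_a a N G)"

definition inv_dist_pow :: "real \<Rightarrow> real^2 \<Rightarrow> real^2 \<Rightarrow> ennreal" where
  "inv_dist_pow g u v = (if u = v then \<top> else ennreal (norm (u - v) powr (-g)))"

definition enn_powr :: "ennreal \<Rightarrow> real \<Rightarrow> ennreal" where
  "enn_powr x e = (if x = \<top> then \<top> else ennreal (enn2real x powr e))"

end

theory Submission
  imports Defs
begin

text \<open>
  Since \<open>Phi u v \<ge> (sqrt u - sqrt v)\<^sup>2\<close>, an inequality of Young type bounds the mass of a
  nonnegative \<open>g\<close> on a disc \<open>B(x\<^sub>0, r)\<close> by a fixed fraction \<open>\<theta> < 1\<close> of its mass on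
  \<open>B(x\<^sub>0, 2r)\<close> plus \<open>C r\<^sup>a\<close> times the fractional energy of \<open>g\<close>; iterating this over all dyadic
  scales gives the Morrey bound \<open>\<integral>\<^bsub>B(x\<^sub>0,r)\<^esub> g \<lesssim> r\<^sup>a E\<^sub>a(g)\<close>. Cutting \<open>|x - x\<^sub>0|\<^sup>-\<^sup>\<gamma>\<close> into
  dyadic shells and summing the geometric series (here \<open>\<gamma> < a\<close> is used) gives
  \<open>\<integral> g |x - x\<^sub>0|\<^sup>-\<^sup>\<gamma> \<lesssim> \<rho>\<^sup>-\<^sup>\<gamma> \<integral> g + \<rho>\<^sup>a\<^sup>-\<^sup>\<gamma> E\<^sub>a(g)\<close> for every \<open>\<rho> > 0\<close>. Applying this to the
  density of \<open>F\<^sup>N\<close> in the variable \<open>x\<^sub>k\<close> and averaging over \<open>k\<close>, which exchangeability allows,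
  bounds the pair interaction by \<open>\<rho>\<^sup>-\<^sup>\<gamma> + C \<rho>\<^sup>a\<^sup>-\<^sup>\<gamma> I\<^sup>N\<^sub>a(F\<^sup>N)\<close>. Choosing \<open>\<rho> = I\<^sup>-\<^sup>1\<^sup>/\<^sup>a\<close>
  yields the exponent \<open>\<gamma> / a\<close>, which is at most the stated one because \<open>p > 2 / (2 - \<gamma>)\<close>.
\<close>

definition frac_energy :: "real \<Rightarrow> (real^2 \<Rightarrow> real) \<Rightarrow> ennreal" where
  "frac_energy a g =
     (\<integral>\<^sup>+x. \<integral>\<^sup>+y. Phi (g x) (g y) * ennreal (norm (x - y) powr -(2 + a)) \<partial>lborel \<partial>lborel)"

lemma fisher_a_eq_frac_energy:
  "fisher_a a N G = ennreal (1 / (2 * real N)) *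
     (\<Sum>k<N. \<integral>\<^sup>+z. frac_energy a (\<lambda>x. G (z(k := x))) \<partial>PiM ({..<N} - {k}) (\<lambda>_. lborel))"
  by (simp add: fisher_a_def frac_energy_def)

lemma sqrt_diff_sq_le_mult_ln_diff:
  fixes u v :: real
  assumes "0 < v" "v \<le> u"
  shows "(sqrt u - sqrt v)^2 \<le> (u - v) * (ln u - ln v)"
proof -
  have "1 - v / u \<le> ln u - ln v"
    using ln_le_minus_one[of "v / u"] assms by (simp add: ln_div)
  then have "(u - v) * (1 - v / u) \<le> (u - v) * (ln u - ln v)"
    using assms by (intro mult_left_mono) auto
  moreover have "(u - v) * (1 - v / u) = (u - v)^2 / u"
    using assms by (simp add: field_simps power2_eq_square)
  moreover have "(sqrt u - sqrt v)^2 \<le> (u - v)^2 / u"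
  proof -
    have "u - v = (sqrt u - sqrt v) * (sqrt u + sqrt v)"
      using assms by (simp add: algebra_simps)
    then have "(u - v)^2 = (sqrt u - sqrt v)^2 * (sqrt u + sqrt v)^2"
      by (simp add: power_mult_distrib)
    moreover have "u \<le> (sqrt u + sqrt v)^2"
      using assms by (simp add: power2_eq_square algebra_simps)
    ultimately show ?thesis
      using assms by (simp add: pos_le_divide_eq mult_left_mono)
  qed
  ultimately show ?thesis
    by linarith
qed

lemma sqrt_diff_sq_le_Phi:
  assumes "0 \<le> u" "0 \<le> v"
  shows "ennreal ((sqrt u - sqrt v)^2) \<le> Phi u v"
proof (cases "u = v \<or> u \<le> 0 \<or> v \<le> 0")
  case True
  then show ?thesis by (auto simp: Phi_def)
next
  case False
  then have "(sqrt u - sqrt v)^2 \<le> (u - v) * (ln u - ln v)"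
    using sqrt_diff_sq_le_mult_ln_diff[of v u] sqrt_diff_sq_le_mult_ln_diff[of u v]
    by (cases "v \<le> u") (auto simp: power2_commute algebra_simps)
  then show ?thesis
    using False by (simp add: Phi_def ennreal_leI)
qed

lemma measurable_Phi [measurable]:
  assumes [measurable]: "f \<in> borel_measurable M" "g \<in> borel_measurable M"
  shows "(\<lambda>x. Phi (f x) (g x)) \<in> borel_measurable M"
  unfolding Phi_def by measurable

lemma power2_add_le_weighted:
  fixes u w e :: real
  assumes "0 < e"
  shows "(u + w)^2 \<le> (1 + e) * u^2 + (1 + 1 / e) * w^2"
proof -
  have "(1 + e) * u^2 + (1 + 1 / e) * w^2 - (u + w)^2 = (e * u - w)^2 / e"
    using assms by (simp add: field_simps power2_eq_square)
  then show ?thesis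
    using assms by (smt (verit) divide_nonneg_pos zero_le_power2)
qed

lemma le_weighted_Phi:
  assumes "0 \<le> u" "0 \<le> v" "0 < e" "0 \<le> t" "1 \<le> D * t"
  shows "ennreal u \<le> ennreal (1 + e) * ennreal v + ennreal ((1 + 1 / e) * D) * (Phi u v * ennreal t)"
proof -
  define s where "s = (sqrt u - sqrt v)^2"
  have "0 \<le> D"
    using assms by (smt (verit) mult_nonpos_nonneg)
  have "u \<le> (1 + e) * v + (1 + 1 / e) * s"
    using power2_add_le_weighted[OF \<open>0 < e\<close>, of "sqrt v" "sqrt u - sqrt v"] assms
    by (simp add: s_def)
  then have "ennreal u \<le> ennreal (1 + e) * ennreal v + ennreal (1 + 1 / e) * ennreal s"
    using assms by (simp add: s_def ennreal_leI flip: ennreal_mult ennreal_plus del: ennreal_plus)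
  also have "\<dots> \<le> ennreal (1 + e) * ennreal v + ennreal (1 + 1 / e) * (ennreal (D * t) * Phi u v)"
    using mult_mono[OF ennreal_leI[OF \<open>1 \<le> D * t\<close>] sqrt_diff_sq_le_Phi[of u v]] assms
    by (intro add_left_mono mult_left_mono) (simp_all add: s_def)
  also have "ennreal (1 + 1 / e) * (ennreal (D * t) * Phi u v) = ennreal ((1 + 1 / e) * D) * (Phi u v * ennreal t)"
    using assms \<open>0 \<le> D\<close> by (simp add: ennreal_mult mult_ac del: ennreal_plus)
  finally show ?thesis .
qed

lemma emeasure_ball_real2:
  "0 \<le> r \<Longrightarrow> emeasure lborel (ball (c :: real^2) r) = ennreal (pi * r^2)"
proof -
  have "Gamma (2 :: real) = 1"
    using Gamma_fact[of 1] by (simp add: numeral_2_eq_2)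
  then show "0 \<le> r \<Longrightarrow> ?thesis"
    using emeasure_ball[of r c] by (simp add: unit_ball_vol_def)
qed

lemma one_le_powr_mult_norm_powr:
  fixes x y :: "'a :: real_normed_vector"
  assumes "x \<noteq> y" "norm (x - y) \<le> R" "0 \<le> b"
  shows "1 \<le> R powr b * norm (x - y) powr -b"
proof -
  have "norm (x - y) powr b * norm (x - y) powr -b = 1"
    using assms by (simp flip: powr_add)
  moreover have "norm (x - y) powr b \<le> R powr b"
    using assms by (intro powr_mono2) auto
  ultimately show ?thesis
    by (metis mult_right_mono powr_ge_zero)
qed

lemma le_weighted_Phi_on_balls:
  fixes g :: "real^2 \<Rightarrow> real"
  assumes g_nonneg: "\<And>x. 0 \<le> g x" and "0 < e" "0 < a"
    and "x \<in> ball x0 r" "y \<in> ball x0 (2 * r)"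
  shows "ennreal (g x) \<le> ennreal (1 + e) * ennreal (g y)
    + ennreal ((1 + 1 / e) * (3 * r) powr (2 + a)) * (Phi (g x) (g y) * ennreal (norm (x - y) powr -(2 + a)))"
proof (cases "x = y")
  case True
  have "g x \<le> (1 + e) * g x"
    using assms g_nonneg[of x] by (simp add: distrib_right)
  then have "ennreal (g x) \<le> ennreal (1 + e) * ennreal (g x)"
    using assms g_nonneg[of x] by (simp add: ennreal_leI flip: ennreal_mult del: ennreal_plus)
  then show ?thesis
    using True by (simp add: add_increasing2)
next
  case False
  have "norm (x - y) \<le> 3 * r"
    using assms norm_triangle_ineq[of "x - x0" "x0 - y"] by (simp add: dist_norm norm_minus_commute)
  then have "1 \<le> (3 * r) powr (2 + a) * norm (x - y) powr -(2 + a)"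
    using False assms by (intro one_le_powr_mult_norm_powr) auto
  then show ?thesis
    using le_weighted_Phi[OF g_nonneg g_nonneg \<open>0 < e\<close>] by simp
qed

lemma nn_integral_ball_doubling:
  fixes g :: "real^2 \<Rightarrow> real"
  assumes g [measurable]: "g \<in> borel_measurable lborel" and g_nonneg: "\<And>x. 0 \<le> g x"
    and "0 < e" "0 < r" "0 < a"
  shows "(\<integral>\<^sup>+x. ennreal (g x) * indicator (ball x0 r) x \<partial>lborel) * ennreal (4 * pi * r^2) \<le>
     ennreal ((1 + e) * (pi * r^2)) * (\<integral>\<^sup>+x. ennreal (g x) * indicator (ball x0 (2 * r)) x \<partial>lborel)
   + ennreal ((1 + 1 / e) * (3 * r) powr (2 + a)) * frac_energy a g"
proof -
  define C where "C = (1 + 1 / e) * (3 * r) powr (2 + a)"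
  define A where "A = (\<integral>\<^sup>+y. ennreal (g y) * indicator (ball x0 (2 * r)) y \<partial>lborel)"
  define E where "E x = (\<integral>\<^sup>+y. Phi (g x) (g y) * ennreal (norm (x - y) powr -(2 + a)) \<partial>lborel)" for x
  have [measurable]: "\<And>s. ball x0 s \<in> sets borel"
    by simp
  have [measurable]: "E \<in> borel_measurable lborel"
    unfolding E_def by measurable
  have inner: "ennreal (g x) * ennreal (4 * pi * r^2) \<le> ennreal (1 + e) * A + ennreal C * E x"
    if "x \<in> ball x0 r" for x
  proof -
    have "ennreal (g x) * ennreal (4 * pi * r^2) =
        (\<integral>\<^sup>+y. ennreal (g x) * indicator (ball x0 (2 * r)) y \<partial>lborel)"
      using assms nn_integral_cmult_indicator[of "ball x0 (2 * r)" lborel "ennreal (g x)"]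
      by (simp add: emeasure_ball_real2 power_mult_distrib mult_ac del: nn_integral_indicator_singleton)
    also have "\<dots> \<le> (\<integral>\<^sup>+y. ennreal (1 + e) * (ennreal (g y) * indicator (ball x0 (2 * r)) y)
        + ennreal C * (Phi (g x) (g y) * ennreal (norm (x - y) powr -(2 + a))) \<partial>lborel)"
    proof (rule nn_integral_mono)
      fix y
      show "ennreal (g x) * indicator (ball x0 (2 * r)) y \<le> ennreal (1 + e) * (ennreal (g y) * indicator (ball x0 (2 * r)) y)
          + ennreal C * (Phi (g x) (g y) * ennreal (norm (x - y) powr -(2 + a)))"
        using le_weighted_Phi_on_balls[OF g_nonneg \<open>0 < e\<close> \<open>0 < a\<close> that, of y]
        by (cases "y \<in> ball x0 (2 * r)") (simp_all add: C_def)
    qed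
    also have "\<dots> = ennreal (1 + e) * A + ennreal C * E x"
      by (simp add: A_def E_def nn_integral_add nn_integral_cmult)
    finally show ?thesis .
  qed
  have "(\<integral>\<^sup>+x. ennreal (g x) * indicator (ball x0 r) x \<partial>lborel) * ennreal (4 * pi * r^2) =
      (\<integral>\<^sup>+x. ennreal (g x) * indicator (ball x0 r) x * ennreal (4 * pi * r^2) \<partial>lborel)"
    by (rule nn_integral_multc[symmetric]) measurable
  also have "\<dots> \<le> (\<integral>\<^sup>+x. ennreal (1 + e) * A * indicator (ball x0 r) x + ennreal C * E x \<partial>lborel)"
  proof (rule nn_integral_mono)
    fix x
    show "ennreal (g x) * indicator (ball x0 r) x * ennreal (4 * pi * r^2)
        \<le> ennreal (1 + e) * A * indicator (ball x0 r) x + ennreal C * E x"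
      using inner[of x] by (cases "x \<in> ball x0 r") (simp_all add: mult_ac)
  qed
  also have "\<dots> = (\<integral>\<^sup>+x. ennreal (1 + e) * A * indicator (ball x0 r) x \<partial>lborel)
      + (\<integral>\<^sup>+x. ennreal C * E x \<partial>lborel)"
    by (rule nn_integral_add) measurable
  also have "\<dots> = ennreal (1 + e) * A * ennreal (pi * r^2) + ennreal C * frac_energy a g"
    using assms by (simp add: nn_integral_cmult emeasure_ball_real2 E_def frac_energy_def)
  also have "ennreal (1 + e) * A * ennreal (pi * r^2) = ennreal ((1 + e) * (pi * r^2)) * A"
    using assms by (simp add: ennreal_mult' mult_ac del: ennreal_plus)
  finally show ?thesis
    unfolding A_def C_def .
qed

lemma ball_mass_recursion:
  fixes g :: "real^2 \<Rightarrow> real"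
  assumes g: "g \<in> borel_measurable lborel" and g_nonneg: "\<And>x. 0 \<le> g x"
    and "0 < e" "0 < s" "0 < a" "0 \<le> m" "0 \<le> m2" "0 \<le> E"
    and m: "(\<integral>\<^sup>+x. ennreal (g x) * indicator (ball x0 s) x \<partial>lborel) = ennreal m"
    and m2: "(\<integral>\<^sup>+x. ennreal (g x) * indicator (ball x0 (2 * s)) x \<partial>lborel) = ennreal m2"
    and E: "frac_energy a g = ennreal E"
  shows "m \<le> (1 + e) / 4 * m2 + (1 + 1 / e) * 3 powr (2 + a) / (4 * pi) * E * s powr a"
proof -
  have "ennreal m * ennreal (4 * pi * s^2)
      \<le> ennreal ((1 + e) * (pi * s^2)) * ennreal m2 + ennreal ((1 + 1 / e) * (3 * s) powr (2 + a)) * ennreal E"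
    using nn_integral_ball_doubling[OF g g_nonneg \<open>0 < e\<close> \<open>0 < s\<close> \<open>0 < a\<close>, of x0]
    by (simp only: m m2 E)
  then have "m * (4 * pi * s^2) \<le> (1 + e) * (pi * s^2) * m2 + (1 + 1 / e) * (3 * s) powr (2 + a) * E"
    using assms by (simp add: ennreal_le_iff del: ennreal_plus flip: ennreal_mult ennreal_plus)
  moreover have "(3 * s) powr (2 + a) = 3 powr (2 + a) * s^2 * s powr a"
    using \<open>0 < s\<close> by (simp add: powr_mult powr_add powr_numeral)
  then have "(1 + e) * (pi * s^2) * m2 + (1 + 1 / e) * (3 * s) powr (2 + a) * E
      = (4 * pi * s^2) * ((1 + e) / 4 * m2 + (1 + 1 / e) * 3 powr (2 + a) / (4 * pi) * E * s powr a)"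
    by (simp add: field_simps)
  ultimately have "(4 * pi * s^2) * m
      \<le> (4 * pi * s^2) * ((1 + e) / 4 * m2 + (1 + 1 / e) * 3 powr (2 + a) / (4 * pi) * E * s powr a)"
    by (simp add: mult.commute)
  then show ?thesis
    using \<open>0 < s\<close> by (simp add: mult_le_cancel_left)
qed

lemma le_of_doubling_recursion:
  fixes \<alpha> :: "real \<Rightarrow> real"
  assumes bounded: "\<And>s. \<alpha> s \<le> m"
    and recursion: "\<And>s. 0 < s \<Longrightarrow> \<alpha> s \<le> \<theta> * \<alpha> (2 * s) + B * s powr a"
    and "0 \<le> \<theta>" "0 \<le> a" "0 \<le> B" "\<theta> * 2 powr a < 1" "0 < r"
  shows "\<alpha> r \<le> B * r powr a / (1 - \<theta> * 2 powr a)"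
proof -
  define q where "q = \<theta> * 2 powr a"
  have "0 \<le> q" "q < 1"
    using assms by (simp_all add: q_def)
  have "\<theta> \<le> q"
    using mult_left_mono[OF ge_one_powr_ge_zero[of 2 a] \<open>0 \<le> \<theta>\<close>] assms by (simp add: q_def)
  then have "\<theta> < 1"
    using \<open>q < 1\<close> by linarith
  have iterate: "\<alpha> s \<le> \<theta>^n * \<alpha> (2^n * s) + B * s powr a * (\<Sum>k<n. q^k)" if "0 < s" for n s
    using that
  proof (induction n arbitrary: s)
    case (Suc n)
    have "\<theta> * \<alpha> (2 * s) \<le> \<theta> * (\<theta>^n * \<alpha> (2^n * (2 * s)) + B * (2 * s) powr a * (\<Sum>k<n. q^k))"
      using Suc.IH[of "2 * s"] Suc.prems \<open>0 \<le> \<theta>\<close> by (intro mult_left_mono) auto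
    then have "\<alpha> s \<le> \<theta> * (\<theta>^n * \<alpha> (2^n * (2 * s)) + B * (2 * s) powr a * (\<Sum>k<n. q^k)) + B * s powr a"
      using recursion[OF Suc.prems] by linarith
    also have "\<dots> = \<theta>^Suc n * \<alpha> (2^Suc n * s) + B * s powr a * (1 + q * (\<Sum>k<n. q^k))"
      using Suc.prems by (simp add: powr_mult q_def algebra_simps)
    also have "1 + q * (\<Sum>k<n. q^k) = (\<Sum>k<Suc n. q^k)"
      by (simp only: sum.lessThan_Suc_shift sum_distrib_left power_Suc power_0)
    finally show ?case .
  qed simp
  have bound: "\<alpha> r \<le> \<theta>^n * m + B * r powr a / (1 - q)" for n
  proof -
    have "(\<Sum>k<n. q^k) \<le> 1 / (1 - q)"
      using sum_gp_strict[of q n] \<open>0 \<le> q\<close> \<open>q < 1\<close> by (simp add: divide_right_mono)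
    then have "B * r powr a * (\<Sum>k<n. q^k) \<le> B * r powr a * (1 / (1 - q))"
      using assms by (intro mult_left_mono) auto
    moreover have "\<theta>^n * \<alpha> (2^n * r) \<le> \<theta>^n * m"
      using bounded \<open>0 \<le> \<theta>\<close> by (intro mult_left_mono) auto
    ultimately show ?thesis
      using iterate[OF \<open>0 < r\<close>, of n] by simp
  qed
  have "(\<lambda>n. \<theta>^n * m + B * r powr a / (1 - q)) \<longlonglongrightarrow> 0 * m + B * r powr a / (1 - q)"
    using \<open>0 \<le> \<theta>\<close> \<open>\<theta> < 1\<close> by (intro tendsto_intros LIMSEQ_power_zero) auto
  then have "\<alpha> r \<le> 0 * m + B * r powr a / (1 - q)"
    by (rule LIMSEQ_le_const) (use bound in blast)
  then show ?thesis
    by (simp add: q_def)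
qed

lemma morrey_estimate:
  assumes "0 < a" "a < 2"
  obtains K where "0 < K"
    and "\<And>g x0 r. g \<in> borel_measurable lborel \<Longrightarrow> (\<And>x. 0 \<le> g x) \<Longrightarrow>
       (\<integral>\<^sup>+x. ennreal (g x) \<partial>lborel) < \<infinity> \<Longrightarrow> 0 < r \<Longrightarrow>
       (\<integral>\<^sup>+x. ennreal (g x) * indicator (ball x0 r) x \<partial>lborel) \<le> ennreal (K * r powr a) * frac_energy a g"
proof -
  \<comment> \<open>Any \<open>e\<close> with \<open>(1 + e) 2\<^sup>a < 4\<close> works; this is where \<open>a < 2\<close> is needed.\<close>
  define e where "e = (4 - 2 powr a) / (2 * 2 powr a)"
  define \<theta> where "\<theta> = (1 + e) / 4"
  define B where "B = (1 + 1 / e) * 3 powr (2 + a) / (4 * pi)"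
  define K where "K = B / (1 - \<theta> * 2 powr a)"
  have "2 powr a < 2 powr 2"
    using assms by (intro powr_less_mono) auto
  then have "0 < e" "\<theta> * 2 powr a < 1"
    by (auto simp: e_def \<theta>_def field_simps)
  then have "0 \<le> \<theta>" "0 < B" "0 < K"
    by (simp_all add: \<theta>_def B_def K_def add_pos_pos)
  show ?thesis
  proof (rule that[OF \<open>0 < K\<close>])
    fix g :: "real^2 \<Rightarrow> real" and x0 and r :: real
    assume g: "g \<in> borel_measurable lborel" and g_nonneg: "\<And>x. 0 \<le> g x"
      and finite_mass: "(\<integral>\<^sup>+x. ennreal (g x) \<partial>lborel) < \<infinity>" and "0 < r"
    define \<alpha> where "\<alpha> s = enn2real (\<integral>\<^sup>+x. ennreal (g x) * indicator (ball x0 s) x \<partial>lborel)" for s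
    have \<alpha>_nonneg: "0 \<le> \<alpha> s" for s
      by (simp add: \<alpha>_def)
    have mass_ball_le: "(\<integral>\<^sup>+x. ennreal (g x) * indicator (ball x0 s) x \<partial>lborel)
        \<le> (\<integral>\<^sup>+x. ennreal (g x) \<partial>lborel)" for s
      by (intro nn_integral_mono) (simp split: split_indicator)
    then have mass_ball: "(\<integral>\<^sup>+x. ennreal (g x) * indicator (ball x0 s) x \<partial>lborel) = ennreal (\<alpha> s)" for s
      using le_less_trans[OF mass_ball_le finite_mass] by (simp add: \<alpha>_def less_top)
    show "(\<integral>\<^sup>+x. ennreal (g x) * indicator (ball x0 r) x \<partial>lborel)
        \<le> ennreal (K * r powr a) * frac_energy a g"
    proof (cases "frac_energy a g")
      case (real E)
      have "\<alpha> s \<le> \<theta> * \<alpha> (2 * s) + B * E * s powr a" if "0 < s" for s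
        unfolding \<theta>_def B_def
        by (rule ball_mass_recursion[OF g g_nonneg \<open>0 < e\<close> that \<open>0 < a\<close>])
           (auto simp: real \<open>0 \<le> E\<close> \<alpha>_nonneg intro: mass_ball)
      then have "\<alpha> r \<le> B * E * r powr a / (1 - \<theta> * 2 powr a)"
        using \<open>0 \<le> \<theta>\<close> \<open>\<theta> * 2 powr a < 1\<close> \<open>0 < B\<close> \<open>0 \<le> E\<close> \<open>0 < a\<close> \<open>0 < r\<close> mass_ball_le finite_mass
        by (intro le_of_doubling_recursion[where m = "enn2real (\<integral>\<^sup>+x. ennreal (g x) \<partial>lborel)"])
           (auto simp: \<alpha>_def intro: enn2real_mono)
      then have "ennreal (\<alpha> r) \<le> ennreal (K * r powr a * E)"
        by (intro ennreal_leI) (simp add: K_def mult_ac)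
      also have "\<dots> = ennreal (K * r powr a) * ennreal E"
        using \<open>0 \<le> E\<close> \<open>0 < K\<close> by (intro ennreal_mult mult_nonneg_nonneg) auto
      finally show ?thesis
        by (simp add: mass_ball real)
    next
      case top
      then show ?thesis
        using \<open>0 < K\<close> \<open>0 < r\<close> by (simp add: ennreal_mult_top)
    qed
  qed
qed

lemma measurable_inv_dist_pow [measurable]:
  assumes [measurable]: "f \<in> borel_measurable M" "g \<in> borel_measurable M"
  shows "(\<lambda>x. inv_dist_pow c (f x) (g x)) \<in> borel_measurable M"
  unfolding inv_dist_pow_def by measurable

lemma ennreal_term_le_suminf: "(f n :: ennreal) \<le> suminf f"
  using sum_le_suminf[of f "{n}"] by (simp add: summableI)

lemma inv_dist_pow_le_dyadic_sum:
  fixes x x0 :: "real^2"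
  assumes "x \<noteq> x0" "0 < \<rho>" "0 < c"
  shows "inv_dist_pow c x x0 \<le> ennreal (\<rho> powr -c) +
    (\<Sum>n. ennreal ((\<rho> / 2^Suc n) powr -c) * indicator (ball x0 (\<rho> / 2^n)) x)"
proof -
  define d where "d = norm (x - x0)"
  have "0 < d" and inv_dist: "inv_dist_pow c x x0 = ennreal (d powr -c)"
    using assms by (auto simp: d_def inv_dist_pow_def)
  show ?thesis
  proof (cases "\<rho> \<le> d")
    case True
    then have "ennreal (d powr -c) \<le> ennreal (\<rho> powr -c)"
      using assms by (intro ennreal_leI powr_mono2') auto
    then show ?thesis
      unfolding inv_dist by (rule add_increasing2[OF zero_le])
  next
    case False
    then have "0 < log 2 (\<rho> / d)"
      using \<open>0 < d\<close> by simp
    define n where "n = nat (\<lceil>log 2 (\<rho> / d)\<rceil> - 1)"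
    have "\<lceil>log 2 (\<rho> / d)\<rceil> = int n + 1"
      using \<open>0 < log 2 (\<rho> / d)\<close> ceiling_le_zero[of "log 2 (\<rho> / d)"] by (simp add: n_def)
    then have "2 ^ n < \<rho> / d" "\<rho> / d \<le> 2 ^ Suc n"
      using \<open>0 < d\<close> assms by (simp_all add: ceiling_log_eq_powr_iff powr_realpow flip: of_nat_Suc)
    then have "d < \<rho> / 2^n" "\<rho> / 2^Suc n \<le> d"
      using \<open>0 < d\<close> by (simp_all add: pos_less_divide_eq pos_divide_le_eq mult.commute)
    then have "x \<in> ball x0 (\<rho> / 2^n)" "\<rho> / 2^Suc n \<le> d"
      by (simp_all add: d_def dist_norm norm_minus_commute)
    then have "ennreal (d powr -c) \<le> ennreal ((\<rho> / 2^Suc n) powr -c) * indicator (ball x0 (\<rho> / 2^n)) x"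
      using assms by (simp add: ennreal_leI powr_mono2')
    also have "\<dots> \<le> (\<Sum>n. ennreal ((\<rho> / 2^Suc n) powr -c) * indicator (ball x0 (\<rho> / 2^n)) x)"
      by (rule ennreal_term_le_suminf)
    finally show ?thesis
      unfolding inv_dist by (rule add_increasing[OF zero_le])
  qed
qed

lemma nn_integral_inv_dist_pow_le_dyadic:
  fixes g :: "real^2 \<Rightarrow> real"
  assumes [measurable]: "g \<in> borel_measurable lborel" and "0 < \<rho>" "0 < c"
  shows "(\<integral>\<^sup>+x. ennreal (g x) * inv_dist_pow c x x0 \<partial>lborel)
    \<le> ennreal (\<rho> powr -c) * (\<integral>\<^sup>+x. ennreal (g x) \<partial>lborel)
      + (\<Sum>n. ennreal ((\<rho> / 2^Suc n) powr -c) * (\<integral>\<^sup>+x. ennreal (g x) * indicator (ball x0 (\<rho> / 2^n)) x \<partial>lborel))"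
proof -
  define t where "t n = ennreal ((\<rho> / 2^Suc n) powr -c)" for n
  have [measurable]: "\<And>s. ball x0 s \<in> sets borel"
    by simp
  have "(\<integral>\<^sup>+x. ennreal (g x) * inv_dist_pow c x x0 \<partial>lborel)
      \<le> (\<integral>\<^sup>+x. ennreal (\<rho> powr -c) * ennreal (g x)
           + (\<Sum>n. t n * (ennreal (g x) * indicator (ball x0 (\<rho> / 2^n)) x)) \<partial>lborel)"
  proof (rule nn_integral_mono_AE)
    show "AE x in lborel. ennreal (g x) * inv_dist_pow c x x0 \<le> ennreal (\<rho> powr -c) * ennreal (g x)
        + (\<Sum>n. t n * (ennreal (g x) * indicator (ball x0 (\<rho> / 2^n)) x))"
      using AE_lborel_singleton[of x0]
    proof eventually_elim
      case (elim x)
      then have "ennreal (g x) * inv_dist_pow c x x0 \<le> ennreal (g x) * (ennreal (\<rho> powr -c) +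
          (\<Sum>n. t n * indicator (ball x0 (\<rho> / 2^n)) x))"
        unfolding t_def using assms by (intro mult_left_mono inv_dist_pow_le_dyadic_sum) auto
      then show ?case
        by (simp add: distrib_left mult_ac flip: ennreal_suminf_cmult)
    qed
  qed
  also have "\<dots> = ennreal (\<rho> powr -c) * (\<integral>\<^sup>+x. ennreal (g x) \<partial>lborel)
      + (\<Sum>n. t n * (\<integral>\<^sup>+x. ennreal (g x) * indicator (ball x0 (\<rho> / 2^n)) x \<partial>lborel))"
    by (simp add: nn_integral_add nn_integral_suminf nn_integral_cmult)
  finally show ?thesis
    unfolding t_def .
qed

lemma weighted_inv_dist_pow_estimate:
  assumes "0 < a" "a < 2" "0 < c" "c < a"
  obtains K where "0 < K"
    and "\<And>g x0 \<rho>. g \<in> borel_measurable lborel \<Longrightarrow> (\<And>x. 0 \<le> g x) \<Longrightarrow> 0 < \<rho> \<Longrightarrow>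
       (\<integral>\<^sup>+x. ennreal (g x) * inv_dist_pow c x x0 \<partial>lborel)
       \<le> ennreal (\<rho> powr -c) * (\<integral>\<^sup>+x. ennreal (g x) \<partial>lborel) + ennreal (K * \<rho> powr (a - c)) * frac_energy a g"
proof -
  obtain K0 where "0 < K0" and morrey:
    "\<And>g x0 r. g \<in> borel_measurable lborel \<Longrightarrow> (\<And>x. 0 \<le> g x) \<Longrightarrow>
       (\<integral>\<^sup>+x. ennreal (g x) \<partial>lborel) < \<infinity> \<Longrightarrow> 0 < r \<Longrightarrow>
       (\<integral>\<^sup>+x. ennreal (g x) * indicator (ball x0 r) x \<partial>lborel) \<le> ennreal (K0 * r powr a) * frac_energy a g"
    using morrey_estimate[OF \<open>0 < a\<close> \<open>a < 2\<close>] by blast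
  define q where "q = (2::real) powr (c - a)"
  have "0 < q" "q < 1"
    using powr_less_mono[of "c - a" 0 2] \<open>c < a\<close> by (simp_all add: q_def)
  define K where "K = K0 * 2 powr c / (1 - q)"
  have "0 < K"
    using \<open>0 < K0\<close> \<open>q < 1\<close> by (simp add: K_def)
  then show ?thesis
  proof (rule that)
    fix g :: "real^2 \<Rightarrow> real" and x0 and \<rho> :: real
    assume g: "g \<in> borel_measurable lborel" and g_nonneg: "\<And>x. 0 \<le> g x" and "0 < \<rho>"
    define M where "M = (\<integral>\<^sup>+x. ennreal (g x) \<partial>lborel)"
    define A where "A n = (\<integral>\<^sup>+x. ennreal (g x) * indicator (ball x0 (\<rho> / 2^n)) x \<partial>lborel)" for n
    show "(\<integral>\<^sup>+x. ennreal (g x) * inv_dist_pow c x x0 \<partial>lborel)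
        \<le> ennreal (\<rho> powr -c) * M + ennreal (K * \<rho> powr (a - c)) * frac_energy a g"
    proof (cases "M = \<top>")
      case True
      then show ?thesis
        using \<open>0 < \<rho>\<close> by (simp add: ennreal_mult_top)
    next
      case False
      have shell_bound: "ennreal ((\<rho> / 2^Suc n) powr -c) * A n
          \<le> ennreal (K0 * 2 powr c * \<rho> powr (a - c) * q^n) * frac_energy a g" for n
      proof -
        have "ennreal ((\<rho> / 2^Suc n) powr -c) * A n
            \<le> ennreal ((\<rho> / 2^Suc n) powr -c) * (ennreal (K0 * (\<rho> / 2^n) powr a) * frac_energy a g)"
          using morrey[OF g g_nonneg, of "\<rho> / 2^n" x0] False \<open>0 < \<rho>\<close>
          by (intro mult_left_mono) (auto simp: A_def M_def less_top)
        also have "\<dots> = ennreal ((\<rho> / 2^Suc n) powr -c * (K0 * (\<rho> / 2^n) powr a)) * frac_energy a g"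
          using \<open>0 < K0\<close> by (simp add: ennreal_mult mult.assoc)
        also have "(\<rho> / 2^Suc n) powr -c * (K0 * (\<rho> / 2^n) powr a) = K0 * 2 powr c * \<rho> powr (a - c) * q^n"
          using \<open>0 < \<rho>\<close>
          by (simp add: q_def powr_divide powr_minus powr_diff powr_realpow[symmetric] powr_powr
              powr_add powr_mult field_simps flip: powr_power)
        finally show ?thesis .
      qed
      have "(\<lambda>n. K0 * 2 powr c * \<rho> powr (a - c) * q^n) sums (K0 * 2 powr c * \<rho> powr (a - c) * (1 / (1 - q)))"
        using \<open>0 < q\<close> \<open>q < 1\<close> by (intro sums_mult geometric_sums) simp
      then have geometric: "(\<Sum>n. ennreal (K0 * 2 powr c * \<rho> powr (a - c) * q^n)) = ennreal (K * \<rho> powr (a - c))"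
        using \<open>0 < K0\<close> \<open>0 < q\<close> by (subst suminf_ennreal_eq) (auto simp: K_def)
      have "(\<integral>\<^sup>+x. ennreal (g x) * inv_dist_pow c x x0 \<partial>lborel)
          \<le> ennreal (\<rho> powr -c) * M + (\<Sum>n. ennreal ((\<rho> / 2^Suc n) powr -c) * A n)"
        using nn_integral_inv_dist_pow_le_dyadic[OF g \<open>0 < \<rho>\<close> \<open>0 < c\<close>] by (simp add: M_def A_def)
      also have "\<dots> \<le> ennreal (\<rho> powr -c) * M
          + (\<Sum>n. ennreal (K0 * 2 powr c * \<rho> powr (a - c) * q^n) * frac_energy a g)"
        by (intro add_left_mono suminf_le shell_bound) auto
      also have "\<dots> = ennreal (\<rho> powr -c) * M + ennreal (K * \<rho> powr (a - c)) * frac_energy a g"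
        by (simp add: ennreal_suminf_multc geometric)
      finally show ?thesis .
    qed
  qed
qed

lemma nn_integral_conf_inv_dist_pow_le:
  fixes G :: "(nat \<Rightarrow> real^2) \<Rightarrow> real" and \<beta> \<kappa> :: ennreal
  assumes estimate: "\<And>g x0. g \<in> borel_measurable lborel \<Longrightarrow> (\<And>x. 0 \<le> g x) \<Longrightarrow>
       (\<integral>\<^sup>+x. ennreal (g x) * inv_dist_pow c x x0 \<partial>lborel)
       \<le> \<beta> * (\<integral>\<^sup>+x. ennreal (g x) \<partial>lborel) + \<kappa> * frac_energy a g"
    and G [measurable]: "G \<in> borel_measurable (leb_conf N)" and G_nonneg: "\<And>x. 0 \<le> G x"
    and "k < N" "l < N" "k \<noteq> l"
  shows "(\<integral>\<^sup>+x. ennreal (G x) * inv_dist_pow c (x k) (x l) \<partial>leb_conf N)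
    \<le> \<beta> * (\<integral>\<^sup>+x. ennreal (G x) \<partial>leb_conf N)
      + \<kappa> * (\<integral>\<^sup>+z. frac_energy a (\<lambda>x. G (z(k := x))) \<partial>PiM ({..<N} - {k}) (\<lambda>_. lborel))"
proof -
  interpret product_sigma_finite "\<lambda>_. lborel :: (real^2) measure"
    by standard
  define I where "I = {..<N} - {k}"
  have "k \<notin> I" "finite I" "l \<in> I"
    using assms by (auto simp: I_def)
  have conf: "leb_conf N = PiM (insert k I) (\<lambda>_. lborel)"
    using \<open>k < N\<close> by (simp add: leb_conf_def I_def insert_absorb)
  have [measurable]: "G \<in> borel_measurable (PiM (insert k I) (\<lambda>_. lborel))"
    using G unfolding conf .
  have slice [measurable]: "(\<lambda>x. G (z(k := x))) \<in> borel_measurable lborel"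
    if "z \<in> space (PiM I (\<lambda>_. lborel))" for z
    using measurable_component_update[OF that \<open>k \<notin> I\<close>] by measurable
  have "(\<integral>\<^sup>+x. ennreal (G x) * inv_dist_pow c (x k) (x l) \<partial>leb_conf N)
      = (\<integral>\<^sup>+z. \<integral>\<^sup>+x. ennreal (G (z(k := x))) * inv_dist_pow c x (z l) \<partial>lborel \<partial>PiM I (\<lambda>_. lborel))"
    unfolding conf using \<open>k \<notin> I\<close> \<open>finite I\<close> \<open>l \<in> I\<close> \<open>k \<noteq> l\<close>
    by (subst product_nn_integral_insert) (auto intro!: nn_integral_cong)
  also have "\<dots> \<le> (\<integral>\<^sup>+z. \<beta> * (\<integral>\<^sup>+x. ennreal (G (z(k := x))) \<partial>lborel)
      + \<kappa> * frac_energy a (\<lambda>x. G (z(k := x))) \<partial>PiM I (\<lambda>_. lborel))"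
    by (intro nn_integral_mono estimate slice G_nonneg)
  also have "\<dots> = \<beta> * (\<integral>\<^sup>+z. \<integral>\<^sup>+x. ennreal (G (z(k := x))) \<partial>lborel \<partial>PiM I (\<lambda>_. lborel))
      + \<kappa> * (\<integral>\<^sup>+z. frac_energy a (\<lambda>x. G (z(k := x))) \<partial>PiM I (\<lambda>_. lborel))"
    using \<open>k \<notin> I\<close> by (subst nn_integral_add) (auto simp: nn_integral_cmult frac_energy_def)
  also have "(\<integral>\<^sup>+z. \<integral>\<^sup>+x. ennreal (G (z(k := x))) \<partial>lborel \<partial>PiM I (\<lambda>_. lborel))
      = (\<integral>\<^sup>+x. ennreal (G x) \<partial>leb_conf N)"
    unfolding conf using \<open>k \<notin> I\<close> \<open>finite I\<close> by (subst product_nn_integral_insert) auto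
  finally show ?thesis
    unfolding I_def .
qed

lemma measurable_comp_permutes:
  assumes "\<sigma> permutes I"
  shows "(\<lambda>x. x \<circ> \<sigma>) \<in> measurable (PiM I (\<lambda>_. M)) (PiM I (\<lambda>_. M))"
proof (rule measurable_PiM_single')
  show "(\<lambda>x. (x \<circ> \<sigma>) i) \<in> measurable (PiM I (\<lambda>_. M)) M" if "i \<in> I" for i
    using permutes_in_image[OF assms] that by simp
  show "(\<lambda>x. x \<circ> \<sigma>) \<in> space (PiM I (\<lambda>_. M)) \<rightarrow> (\<Pi>\<^sub>E i\<in>I. space M)"
    using permutes_in_image[OF assms] permutes_not_in[OF assms]
    by (auto simp: space_PiM PiE_def Pi_def extensional_def)
qed

lemma sym_prob_nn_integral_comp_permutes:
  assumes F: "sym_prob N F" and \<sigma>: "\<sigma> permutes {..<N}" and f: "f \<in> borel_measurable (leb_conf N)"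
  shows "(\<integral>\<^sup>+x. f (x \<circ> \<sigma>) \<partial>F) = (\<integral>\<^sup>+x. f x \<partial>F)"
proof -
  have sets_F: "sets F = sets (leb_conf N)" and invariant: "distr F F (\<lambda>x. x \<circ> \<sigma>) = F"
    using F \<sigma> by (auto simp: sym_prob_def)
  have "(\<lambda>x. x \<circ> \<sigma>) \<in> measurable F F"
    using measurable_comp_permutes[OF \<sigma>]
    by (simp add: leb_conf_def measurable_cong_sets[OF sets_F sets_F])
  moreover have "f \<in> borel_measurable (distr F F (\<lambda>x. x \<circ> \<sigma>))"
    using f by (simp add: measurable_cong_sets[OF sets_F refl] measurable_cong_sets[OF sets_distr refl])
  ultimately have "(\<integral>\<^sup>+x. f x \<partial>distr F F (\<lambda>x. x \<circ> \<sigma>)) = (\<integral>\<^sup>+x. f (x \<circ> \<sigma>) \<partial>F)"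
    by (intro nn_integral_distr)
  then show ?thesis
    unfolding invariant ..
qed

lemma sym_prob_inv_dist_pow_swap:
  assumes F: "sym_prob N F" and "i < N" "j < N" "i \<noteq> j" "k < N"
  obtains l where "l < N" "l \<noteq> k"
    and "(\<integral>\<^sup>+x. inv_dist_pow c (x i) (x j) \<partial>F) = (\<integral>\<^sup>+x. inv_dist_pow c (x k) (x l) \<partial>F)"
proof -
  define \<sigma> where "\<sigma> = Transposition.transpose i k"
  have \<sigma>: "\<sigma> permutes {..<N}"
    using assms by (simp add: \<sigma>_def permutes_swap_id)
  have "\<sigma> j < N" "\<sigma> j \<noteq> k"
    using assms by (auto simp: \<sigma>_def Transposition.transpose_def)
  moreover have "(\<integral>\<^sup>+x. inv_dist_pow c (x k) (x (\<sigma> j)) \<partial>F) = (\<integral>\<^sup>+x. inv_dist_pow c (x i) (x j) \<partial>F)"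
  proof -
    have "(\<lambda>x. inv_dist_pow c (x k) (x (\<sigma> j))) \<in> borel_measurable (leb_conf N)"
      using \<open>k < N\<close> \<open>\<sigma> j < N\<close> by (simp add: leb_conf_def)
    from sym_prob_nn_integral_comp_permutes[OF F \<sigma> this] show ?thesis
      by (simp add: \<sigma>_def)
  qed
  ultimately show ?thesis
    using that by auto
qed

lemma nn_integral_density_eq_1:
  assumes "prob_space F" "F = density M (\<lambda>x. ennreal (G x))" "G \<in> borel_measurable M"
  shows "(\<integral>\<^sup>+x. ennreal (G x) \<partial>M) = 1"
proof -
  have "(\<integral>\<^sup>+x. ennreal (G x) \<partial>M) = (\<integral>\<^sup>+x. 1 \<partial>F)"
    using assms(2,3) nn_integral_density[of "\<lambda>x. ennreal (G x)" M "\<lambda>_. 1"] by simp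
  also have "\<dots> = 1"
    using prob_space.emeasure_space_1[OF assms(1)] by simp
  finally show ?thesis .
qed

lemma sym_prob_inv_dist_pow_le_fisher_a:
  fixes G :: "(nat \<Rightarrow> real^2) \<Rightarrow> real" and \<beta> \<kappa> :: ennreal
  assumes estimate: "\<And>g x0. g \<in> borel_measurable lborel \<Longrightarrow> (\<And>x. 0 \<le> g x) \<Longrightarrow>
       (\<integral>\<^sup>+x. ennreal (g x) * inv_dist_pow c x x0 \<partial>lborel)
       \<le> \<beta> * (\<integral>\<^sup>+x. ennreal (g x) \<partial>lborel) + \<kappa> * frac_energy a g"
    and F: "sym_prob N F" and F_density: "F = density (leb_conf N) (\<lambda>x. ennreal (G x))"
    and G [measurable]: "G \<in> borel_measurable (leb_conf N)" and G_nonneg: "\<And>x. 0 \<le> G x"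
    and "i < N" "j < N" "i \<noteq> j"
  shows "(\<integral>\<^sup>+x. inv_dist_pow c (x i) (x j) \<partial>F) \<le> \<beta> + 2 * \<kappa> * fisher_a a N G"
proof -
  define Q where "Q = (\<integral>\<^sup>+x. inv_dist_pow c (x i) (x j) \<partial>F)"
  define T where "T k = (\<integral>\<^sup>+z. frac_energy a (\<lambda>x. G (z(k := x))) \<partial>PiM ({..<N} - {k}) (\<lambda>_. lborel))" for k
  have "0 < N"
    using \<open>i < N\<close> by simp
  have mass: "(\<integral>\<^sup>+x. ennreal (G x) \<partial>leb_conf N) = 1"
    using F F_density G by (intro nn_integral_density_eq_1) (auto simp: sym_prob_def)
  have each: "Q \<le> \<beta> + \<kappa> * T k" if k_lt: "k < N" for k
  proof -
    obtain l where "l < N" "l \<noteq> k" and Q_eq: "Q = (\<integral>\<^sup>+x. inv_dist_pow c (x k) (x l) \<partial>F)"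
      using sym_prob_inv_dist_pow_swap[OF F \<open>i < N\<close> \<open>j < N\<close> \<open>i \<noteq> j\<close> k_lt] unfolding Q_def by blast
    have "Q = (\<integral>\<^sup>+x. ennreal (G x) * inv_dist_pow c (x k) (x l) \<partial>leb_conf N)"
      using k_lt \<open>l < N\<close> G unfolding Q_eq F_density leb_conf_def
      by (subst nn_integral_density) auto
    also have "\<dots> \<le> \<beta> + \<kappa> * T k"
      using nn_integral_conf_inv_dist_pow_le[OF estimate G G_nonneg k_lt \<open>l < N\<close>] \<open>l \<noteq> k\<close>
      by (simp add: mass T_def)
    finally show ?thesis .
  qed
  have "of_nat N * Q = (\<Sum>k<N. Q)"
    by simp
  also have "\<dots> \<le> (\<Sum>k<N. \<beta> + \<kappa> * T k)"
    by (intro sum_mono each) simp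
  also have "\<dots> = of_nat N * \<beta> + \<kappa> * (\<Sum>k<N. T k)"
    by (simp add: sum.distrib sum_distrib_left)
  also have "(\<Sum>k<N. T k) = of_nat N * (2 * fisher_a a N G)"
  proof -
    have "ennreal (2 * real N) * ennreal (1 / (2 * real N)) = 1"
      using \<open>0 < N\<close> by (simp flip: ennreal_mult)
    moreover have "ennreal (2 * real N) = of_nat N * 2"
      by (simp add: ennreal_of_nat_eq_real_of_nat ennreal_mult mult.commute)
    ultimately have "of_nat N * 2 * ennreal (1 / (2 * real N)) = 1"
      by simp
    then show ?thesis
      by (simp add: fisher_a_eq_frac_energy T_def mult.assoc[symmetric])
  qed
  finally have "of_nat N * Q \<le> of_nat N * (\<beta> + 2 * \<kappa> * fisher_a a N G)"
    by (simp add: distrib_left mult_ac)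
  then show ?thesis
    using \<open>0 < N\<close> unfolding Q_def
    by (subst (asm) ennreal_mult_le_mult_iff) (auto simp: ennreal_of_nat_eq_real_of_nat)
qed

lemma ennreal_le_add_cmult_INF:
  fixes Q b c :: ennreal
  assumes bound: "\<And>x. x \<in> S \<Longrightarrow> Q \<le> b + c * f x" and "c \<noteq> 0" "c \<noteq> \<top>"
  shows "Q \<le> b + c * (INF x\<in>S. f x)"
proof (cases "S = {}")
  case True
  then show ?thesis
    using \<open>c \<noteq> 0\<close> by (simp add: ennreal_mult_top)
next
  case False
  have "mono (\<lambda>y. b + c * y)"
    by (intro monoI add_left_mono mult_left_mono) auto
  moreover have "continuous_on UNIV (\<lambda>y. b + c * y)"
    using \<open>c \<noteq> \<top>\<close>
    by (intro continuous_on_add continuous_on_const ennreal_continuous_on_cmult continuous_on_id)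
       (simp add: top.not_eq_extremum)
  then have "continuous (at_right (INF x\<in>S. f x)) (\<lambda>y. b + c * y)"
    by (rule continuous_on_imp_continuous_within) auto
  ultimately have "b + c * (INF x\<in>S. f x) = (INF x\<in>S. b + c * f x)"
    using continuous_at_Inf_mono[of "\<lambda>y. b + c * y" "f ` S"] False by (simp add: image_comp)
  then show ?thesis
    using bound by (simp add: le_INF_iff)
qed

lemma sym_prob_inv_dist_pow_le_fisher_meas:
  fixes \<beta> \<kappa> :: ennreal
  assumes estimate: "\<And>g x0. g \<in> borel_measurable lborel \<Longrightarrow> (\<And>x. 0 \<le> g x) \<Longrightarrow>
       (\<integral>\<^sup>+x. ennreal (g x) * inv_dist_pow c x x0 \<partial>lborel)
       \<le> \<beta> * (\<integral>\<^sup>+x. ennreal (g x) \<partial>lborel) + \<kappa> * frac_energy a g"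
    and "\<kappa> \<noteq> 0" "\<kappa> \<noteq> \<top>"
    and F: "sym_prob N F" and "i < N" "j < N" "i \<noteq> j"
  shows "(\<integral>\<^sup>+x. inv_dist_pow c (x i) (x j) \<partial>F) \<le> \<beta> + 2 * \<kappa> * fisher_meas a N F"
  unfolding fisher_meas_def
proof (rule ennreal_le_add_cmult_INF)
  fix G
  assume "G \<in> {G. G \<in> borel_measurable (leb_conf N) \<and> (\<forall>x. 0 \<le> G x) \<and>
      F = density (leb_conf N) (\<lambda>x. ennreal (G x))}"
  then show "(\<integral>\<^sup>+x. inv_dist_pow c (x i) (x j) \<partial>F) \<le> \<beta> + 2 * \<kappa> * fisher_a a N G"
    using sym_prob_inv_dist_pow_le_fisher_a[OF estimate F _ _ _ \<open>i < N\<close> \<open>j < N\<close> \<open>i \<noteq> j\<close>]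
    by auto
qed (use \<open>\<kappa> \<noteq> 0\<close> \<open>\<kappa> \<noteq> \<top>\<close> in \<open>simp_all add: ennreal_mult_eq_top_iff\<close>)

lemma ennreal_le_of_scale_family:
  fixes Q I :: ennreal
  assumes "0 < K" "0 < a" "0 < c" "c / a \<le> e"
    and bound: "\<And>\<rho>. 0 < \<rho> \<Longrightarrow> Q \<le> ennreal (\<rho> powr -c) + ennreal (K * \<rho> powr (a - c)) * I"
  shows "Q \<le> ennreal (1 + K) * (1 + enn_powr I e)"
proof (cases I)
  case top
  then show ?thesis
    using \<open>0 < K\<close> by (simp add: enn_powr_def ennreal_mult_top)
next
  case (real t)
  show ?thesis
  proof (cases "t \<le> 1")
    case True
    have "Q \<le> ennreal (1 + K * t)"
      using bound[of 1] real \<open>0 < K\<close> by (simp add: ennreal_mult)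
    also have "\<dots> \<le> ennreal (1 + K) * 1"
      using True \<open>0 < K\<close> \<open>0 \<le> t\<close> by (simp add: ennreal_leI mult_left_le)
    also have "\<dots> \<le> ennreal (1 + K) * (1 + enn_powr I e)"
      by (intro mult_left_mono) simp_all
    finally show ?thesis .
  next
    case False
    define \<rho> where "\<rho> = t powr (-1 / a)"
    have "0 < \<rho>" "\<rho> powr -c = t powr (c / a)"
      using False by (simp_all add: \<rho>_def powr_powr)
    moreover have "\<rho> powr (a - c) * t = t powr (c / a)"
    proof -
      have "\<rho> powr (a - c) * t = t powr (-1 / a * (a - c) + 1)"
        using False powr_add[of t "-1 / a * (a - c)" 1] by (simp add: \<rho>_def powr_powr)
      also have "-1 / a * (a - c) + 1 = c / a"
        using \<open>0 < a\<close> by (simp add: field_simps)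
      finally show ?thesis .
    qed
    ultimately have "Q \<le> ennreal ((1 + K) * t powr (c / a))"
      using bound[of \<rho>] real \<open>0 < K\<close>
      by (simp add: algebra_simps flip: ennreal_mult ennreal_plus del: ennreal_plus)
    also have "\<dots> \<le> ennreal ((1 + K) * t powr e)"
      using False \<open>c / a \<le> e\<close> \<open>0 < K\<close> by (intro ennreal_leI mult_left_mono powr_mono) auto
    also have "\<dots> = ennreal (1 + K) * ennreal (t powr e)"
      using \<open>0 < K\<close> by (intro ennreal_mult) auto
    also have "\<dots> \<le> ennreal (1 + K) * (1 + enn_powr I e)"
      using real by (intro mult_left_mono) (simp_all add: enn_powr_def)
    finally show ?thesis .
  qed
qed

theorem corollary3p16:
  fixes a \<gamma> p :: real
  assumes "0 < a" "a < 2" "0 < \<gamma>" "\<gamma> < a"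
    and "2 / (2 - \<gamma>) < p" "p < 2 / (2 - a)"
  shows "\<exists>C>0. \<forall>N\<ge>2. \<forall>F. sym_prob N F \<longrightarrow>
    (SUP ij \<in> {(i, j). i < N \<and> j < N \<and> i \<noteq> j}.
        \<integral>\<^sup>+ x. inv_dist_pow \<gamma> (x (fst ij)) (x (snd ij)) \<partial>F)
    \<le> ennreal C * (1 + enn_powr (fisher_meas a N F) (1 - (2 / a) * (1 / p - (2 - a) / 2)))"
proof -
  obtain K where "0 < K" and estimate:
    "\<And>g x0 \<rho>. g \<in> borel_measurable lborel \<Longrightarrow> (\<And>x. 0 \<le> g x) \<Longrightarrow> 0 < \<rho> \<Longrightarrow>
       (\<integral>\<^sup>+x. ennreal (g x) * inv_dist_pow \<gamma> x x0 \<partial>lborel)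
       \<le> ennreal (\<rho> powr -\<gamma>) * (\<integral>\<^sup>+x. ennreal (g x) \<partial>lborel) + ennreal (K * \<rho> powr (a - \<gamma>)) * frac_energy a g"
    using weighted_inv_dist_pow_estimate[OF assms(1-4)] by blast
  have "0 < 2 - \<gamma>"
    using assms by simp
  then have "2 < p * (2 - \<gamma>)"
    using assms(5) by (simp add: divide_less_eq mult.commute)
  with \<open>0 < 2 - \<gamma>\<close> have "0 < p"
    by (smt (verit) zero_less_mult_iff)
  with \<open>2 < p * (2 - \<gamma>)\<close> have "2 / p < 2 - \<gamma>"
    by (simp add: divide_less_eq mult.commute)
  then have exponent: "\<gamma> / a \<le> 1 - (2 / a) * (1 / p - (2 - a) / 2)"
    using \<open>0 < a\<close> \<open>0 < p\<close> by (simp add: field_simps)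
  have "(\<integral>\<^sup>+x. inv_dist_pow \<gamma> (x i) (x j) \<partial>F)
      \<le> ennreal (1 + 2 * K) * (1 + enn_powr (fisher_meas a N F) (1 - (2 / a) * (1 / p - (2 - a) / 2)))"
    if F: "sym_prob N F" and "i < N" "j < N" "i \<noteq> j" for N F i j
  proof (rule ennreal_le_of_scale_family[OF _ \<open>0 < a\<close> \<open>0 < \<gamma>\<close> exponent])
    fix \<rho> :: real
    assume "0 < \<rho>"
    have "2 * ennreal (K * \<rho> powr (a - \<gamma>)) = ennreal (2 * K * \<rho> powr (a - \<gamma>))"
      using \<open>0 < K\<close> by (simp add: ennreal_mult mult.assoc)
    then show "(\<integral>\<^sup>+x. inv_dist_pow \<gamma> (x i) (x j) \<partial>F)
        \<le> ennreal (\<rho> powr -\<gamma>) + ennreal (2 * K * \<rho> powr (a - \<gamma>)) * fisher_meas a N F"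
      using sym_prob_inv_dist_pow_le_fisher_meas[OF estimate[OF _ _ \<open>0 < \<rho>\<close>] _ _ F that(2-4)] \<open>0 < K\<close> \<open>0 < \<rho>\<close>
      by simp
  qed (use \<open>0 < K\<close> in simp)
  then show ?thesis
    using \<open>0 < K\<close> by (intro exI[of _ "1 + 2 * K"]) (auto intro!: SUP_least)
qed

end
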